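(* Let $(\Omega,\mathcal{F})$ be a measurable space, $\mathrm{B}_b$ the space of bounded real-valued measurable functions, $\mathbb{P}$ a probability measure on $(\Omega,\mathcal{F})$, and $H\colon\mathrm{B}_b\to\mathbb{R}$ a premium principle that is dominated by $\mathbb{P}$, i.e. $H(X)=H(Y)$ for all $X,Y\in\mathrm{B}_b$ with $X=Y$ $\mathbb{P}$-a.s. Then $R_{\mathrm{Max}}(X):=\inf\{H(X_0)\mid X_0\in\mathrm{B}_b,\ X_0\ge X\}$, $X\in\mathrm{B}_b$, is dominated by $\mathbb{P}$.
   Context: A premium principle is a map $H\colon\mathrm{B}_b\to\mathbb{R}$ with $H(X+m)=H(X)+m$ for $m\in\mathbb{R}$, $H(0)=0$, and $H(X)\ge0$ for $X\ge0$, where $\le$ is the pointwise order. *)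

theory Defs
  imports "HOL-Probability.Probability"
begin

definition Bb :: "'a measure \<Rightarrow> ('a \<Rightarrow> real) set" where
  "Bb M = {X. X \<in> borel_measurable M \<and> bounded (X ` space M)}"

definition premium_principle :: "'a measure \<Rightarrow> (('a \<Rightarrow> real) \<Rightarrow> real) \<Rightarrow> bool" where
  "premium_principle M H \<longleftrightarrow>
     (\<forall>X\<in>Bb M. \<forall>m::real. H (\<lambda>\<omega>. X \<omega> + m) = H X + m)
   \<and> H (\<lambda>_. 0) = 0
   \<and> (\<forall>X\<in>Bb M. (\<forall>\<omega>\<in>space M. X \<omega> \<ge> 0) \<longrightarrow> H X \<ge> 0)"

definition dominated_by :: "'a measure \<Rightarrow> 'a measure \<Rightarrow> (('a \<Rightarrow> real) \<Rightarrow> 'b) \<Rightarrow> bool" where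
  "dominated_by M P F \<longleftrightarrow>
     (\<forall>X\<in>Bb M. \<forall>Y\<in>Bb M. (AE \<omega> in P. X \<omega> = Y \<omega>) \<longrightarrow> F X = F Y)"

text \<open>R_Max, valued in the extended reals (the infimum may be -\<infinity>).\<close>
definition R_Max :: "'a measure \<Rightarrow> (('a \<Rightarrow> real) \<Rightarrow> real) \<Rightarrow> ('a \<Rightarrow> real) \<Rightarrow> ereal" where
  "R_Max M H X = Inf {ereal (H X0) | X0. X0 \<in> Bb M \<and> (\<forall>\<omega>\<in>space M. X \<omega> \<le> X0 \<omega>)}"

end

theory Submission
  imports Defs
begin

text \<open>If \<open>X = Y\<close> almost surely and \<open>X\<^sub>0 \<ge> Y\<close>, then \<open>max X\<^sub>0 X\<close> dominates \<open>X\<close> and equals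
  \<open>X\<^sub>0\<close> almost surely, so it has the same premium as \<open>X\<^sub>0\<close>. Hence every value in the set
  defining \<open>R_Max Y\<close> also occurs in the set defining \<open>R_Max X\<close>, and by symmetry the two
  infima coincide.\<close>

lemma Bb_max:
  assumes "X \<in> Bb M" and "Y \<in> Bb M"
  shows "(\<lambda>\<omega>. max (X \<omega>) (Y \<omega>)) \<in> Bb M"
proof -
  obtain a where a: "\<forall>\<omega>\<in>space M. \<bar>X \<omega>\<bar> \<le> a"
    using assms(1) unfolding Bb_def bounded_iff by auto
  obtain b where b: "\<forall>\<omega>\<in>space M. \<bar>Y \<omega>\<bar> \<le> b"
    using assms(2) unfolding Bb_def bounded_iff by auto
  have "bounded ((\<lambda>\<omega>. max (X \<omega>) (Y \<omega>)) ` space M)"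
    unfolding bounded_iff using a b by (intro exI[of _ "max a b"]) fastforce
  with assms show ?thesis
    by (auto simp: Bb_def)
qed

lemma R_Max_le_if_AE_eq:
  assumes sets_eq: "sets P = sets M" and dom: "dominated_by M P H"
    and X: "X \<in> Bb M" and "Y \<in> Bb M" and ae: "AE \<omega> in P. X \<omega> = Y \<omega>"
  shows "R_Max M H X \<le> R_Max M H Y"
  unfolding R_Max_def
proof (rule Inf_greatest)
  fix v
  assume "v \<in> {ereal (H X0) | X0. X0 \<in> Bb M \<and> (\<forall>\<omega>\<in>space M. Y \<omega> \<le> X0 \<omega>)}"
  then obtain X0 where v: "v = ereal (H X0)" and X0: "X0 \<in> Bb M"
    and Y_le: "\<forall>\<omega>\<in>space M. Y \<omega> \<le> X0 \<omega>"
    by blast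
  define Z where "Z = (\<lambda>\<omega>. max (X0 \<omega>) (X \<omega>))"
  have Z: "Z \<in> Bb M"
    unfolding Z_def using X0 X by (rule Bb_max)
  have space_eq: "space P = space M"
    using sets_eq by (rule sets_eq_imp_space_eq)
  have "AE \<omega> in P. Z \<omega> = X0 \<omega>"
    using ae AE_space[of P] by eventually_elim (use Y_le space_eq in \<open>auto simp: Z_def\<close>)
  then have "H Z = H X0"
    using dom Z X0 unfolding dominated_by_def by blast
  moreover have "\<forall>\<omega>\<in>space M. X \<omega> \<le> Z \<omega>"
    by (simp add: Z_def)
  ultimately show "Inf {ereal (H X0) | X0. X0 \<in> Bb M \<and> (\<forall>\<omega>\<in>space M. X \<omega> \<le> X0 \<omega>)} \<le> v"
    using Z v by (intro Inf_lower CollectI exI[of _ Z]) simp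
qed

theorem proposition4p1:
  fixes M P :: "'a measure" and H :: "('a \<Rightarrow> real) \<Rightarrow> real"
  assumes "prob_space P" and "sets P = sets M"
    and "premium_principle M H"
    and "dominated_by M P H"
  shows "dominated_by M P (R_Max M H)"
  unfolding dominated_by_def
proof (intro ballI impI)
  fix X Y
  assume X: "X \<in> Bb M" and Y: "Y \<in> Bb M" and ae: "AE \<omega> in P. X \<omega> = Y \<omega>"
  then have ae': "AE \<omega> in P. Y \<omega> = X \<omega>"
    by auto
  show "R_Max M H X = R_Max M H Y"
    using R_Max_le_if_AE_eq[OF assms(2,4) X Y ae] R_Max_le_if_AE_eq[OF assms(2,4) Y X ae']
    by (rule antisym)
qed

end
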